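(* Let $(W,S)$ be a finite Coxeter system, let $\varphi:W\hookrightarrow\mathrm{Sym}(n)$ ($n\ge2$) be an E-embedding, and let $\alpha\in[\pi/4,\pi/2)$. Then for every $w\in W$ and every reduced expression $w=s_{i_1}s_{i_2}\cdots s_{i_\ell}$ ($s_{i_j}\in S$), $$\mathrm{B}^\alpha_\varphi(\mathrm{id})\prec\mathrm{B}^\alpha_\varphi(s_{i_1})\prec\mathrm{B}^\alpha_\varphi(s_{i_1}s_{i_2})\prec\cdots\prec\mathrm{B}^\alpha_\varphi(s_{i_1}\cdots s_{i_\ell}).$$
   Context: $(W,S)$ is a finite Coxeter system with length function $\ell$ and reflections $T=\{wsw^{-1}: w\in W,s\in S\}$. The right weak order $<_R$ is the transitive closure of $u<_R us$ for $s\in S$ with $\ell(us)=\ell(u)+1$. The Bruhat order $<_B$ is the transitive closure of $u<_B ut$ for $t\in T$ with $\ell(ut)=\ell(u)+1$. $\mathrm{Sym}(n)$, the permutations of $\{1,\dots,n\}$ written on the right ($(i)w$ is the image of $i$; $uv$ = first $u$ then $v$), is regarded as a Coxeter group with generators $(i,i+1)$ and reflections all transpositions. An E-embedding is an injective group homomorphism $\varphi:W\to\mathrm{Sym}(n)$ such that for all $u,v\in W$, $u<_R v$ implies $\varphi(u)<_B\varphi(v)$. Borders: for $\alpha\in(0,\pi/2)$ and $k=1,\dots,n$ let $\theta_k=\frac{(k-1)(\pi-2\alpha)}{n-1}+\alpha$ and $\beta^k_n=(-\cos\theta_k,\sin\theta_k)$. For $\sigma\in\mathrm{Sym}(n)$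 let $p_i(\sigma)=\sum_{j=1}^{i}\beta_n^{(j)\sigma^{-1}}$ ($i=0,\dots,n$) and let the border $\mathrm{B}^\alpha_n(\sigma)=\bigcup_{i=1}^n[p_{i-1}(\sigma),p_i(\sigma)]$ (a polygonal path). Its $y$-coordinate increases strictly from $0$ to $h^\alpha_n=\sum_k\sin\theta_k$; for $y\in[0,h^\alpha_n]$ let $\mathrm{H}(\mathrm{B}^\alpha_n(\sigma),y)$ be the $x$-coordinate of its unique point at height $y$. Write $\mathrm{B}^\alpha_n(\sigma)\prec\mathrm{B}^\alpha_n(\tau)$ if $\mathrm{H}(\mathrm{B}^\alpha_n(\sigma),y)\le\mathrm{H}(\mathrm{B}^\alpha_n(\tau),y)$ for all $y\in[0,h^\alpha_n]$. For an E-embedding $\varphi$ and $w\in W$ put $\mathrm{B}^\alpha_\varphi(w)=\mathrm{B}^\alpha_n(\varphi(w))$. *)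

theory Defs
  imports "HOL-Analysis.Analysis" "HOL-Algebra.Multiplicative_Group"
    "HOL-Combinatorics.Transposition"
begin

definition wprod :: "('a, 'b) monoid_scheme \<Rightarrow> 'a list \<Rightarrow> 'a" where
  "wprod G ws = foldr (\<lambda>s acc. s \<otimes>\<^bsub>G\<^esub> acc) ws \<one>\<^bsub>G\<^esub>"

definition cox_len :: "('a, 'b) monoid_scheme \<Rightarrow> 'a set \<Rightarrow> 'a \<Rightarrow> nat" where
  "cox_len G S w = (LEAST k. \<exists>ws. set ws \<subseteq> S \<and> length ws = k \<and> wprod G ws = w)"

definition reflections :: "('a, 'b) monoid_scheme \<Rightarrow> 'a set \<Rightarrow> 'a set" where
  "reflections G S = {w \<otimes>\<^bsub>G\<^esub> s \<otimes>\<^bsub>G\<^esub> inv\<^bsub>G\<^esub> w | w s. w \<in> carrier G \<and> s \<in> S}"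

definition weak_lt :: "('a, 'b) monoid_scheme \<Rightarrow> 'a set \<Rightarrow> 'a \<Rightarrow> 'a \<Rightarrow> bool" where
  "weak_lt G S u v \<longleftrightarrow> (u, v) \<in> trancl
     {(x, x \<otimes>\<^bsub>G\<^esub> s) | x s. x \<in> carrier G \<and> s \<in> S \<and>
        cox_len G S (x \<otimes>\<^bsub>G\<^esub> s) = cox_len G S x + 1}"

definition bruhat_lt :: "('a, 'b) monoid_scheme \<Rightarrow> 'a set \<Rightarrow> 'a \<Rightarrow> 'a \<Rightarrow> bool" where
  "bruhat_lt G S u v \<longleftrightarrow> (u, v) \<in> trancl
     {(x, x \<otimes>\<^bsub>G\<^esub> t) | x t. x \<in> carrier G \<and> t \<in> reflections G S \<and>
        cox_len G S (x \<otimes>\<^bsub>G\<^esub> t) = cox_len G S x + 1}"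

definition cox_relators :: "('a, 'b) monoid_scheme \<Rightarrow> 'a set \<Rightarrow> 'a list set" where
  "cox_relators G S = {[s, s] | s. s \<in> S} \<union>
     {concat (replicate (group.ord G (s \<otimes>\<^bsub>G\<^esub> t)) [s, t]) | s t.
        s \<in> S \<and> t \<in> S \<and> group.ord G (s \<otimes>\<^bsub>G\<^esub> t) \<noteq> 0}"

definition cox_step :: "('a, 'b) monoid_scheme \<Rightarrow> 'a set \<Rightarrow> ('a list \<times> 'a list) set" where
  "cox_step G S = {(u @ r @ v, u @ v) | u r v. r \<in> cox_relators G S}"

text \<open>(W,S) is a Coxeter system: W is generated by the involutions S and
  W = < S | s^2, (st)^m(s,t) > (every word over S representing the identity is
  equivalent to the empty word modulo the relators).\<close>
definition coxeter_system :: "('a, 'b) monoid_scheme \<Rightarrow> 'a set \<Rightarrow> bool" where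
  "coxeter_system W S \<longleftrightarrow> group W \<and> S \<subseteq> carrier W \<and>
     carrier W = {wprod W ws | ws. set ws \<subseteq> S} \<and>
     (\<forall>s\<in>S. s \<noteq> \<one>\<^bsub>W\<^esub> \<and> s \<otimes>\<^bsub>W\<^esub> s = \<one>\<^bsub>W\<^esub>) \<and>
     (\<forall>ws. set ws \<subseteq> S \<and> wprod W ws = \<one>\<^bsub>W\<^esub> \<longrightarrow>
        (ws, []) \<in> (cox_step W S \<union> (cox_step W S)\<inverse>)\<^sup>*)"

section \<open>Sym(n), acting on the right: (i)(uv) = ((i)u)v\<close>

definition sym_right :: "nat \<Rightarrow> (nat \<Rightarrow> nat) monoid" where
  "sym_right n = \<lparr>carrier = {p. p permutes {1..n}}, mult = (\<lambda>u v. v \<circ> u), one = id\<rparr>"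

definition adj_transp :: "nat \<Rightarrow> (nat \<Rightarrow> nat) set" where
  "adj_transp n = {Transposition.transpose i (i + 1) | i. 1 \<le> i \<and> i < n}"

definition E_embedding ::
  "('a, 'b) monoid_scheme \<Rightarrow> 'a set \<Rightarrow> nat \<Rightarrow> ('a \<Rightarrow> nat \<Rightarrow> nat) \<Rightarrow> bool" where
  "E_embedding W S n \<phi> \<longleftrightarrow> \<phi> \<in> hom W (sym_right n) \<and> inj_on \<phi> (carrier W) \<and>
     (\<forall>u\<in>carrier W. \<forall>v\<in>carrier W. weak_lt W S u v \<longrightarrow>
        bruhat_lt (sym_right n) (adj_transp n) (\<phi> u) (\<phi> v))"

definition theta :: "real \<Rightarrow> nat \<Rightarrow> nat \<Rightarrow> real" where
  "theta \<alpha> n k = (real k - 1) * (pi - 2 * \<alpha>) / (real n - 1) + \<alpha>"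

definition beta :: "real \<Rightarrow> nat \<Rightarrow> nat \<Rightarrow> real \<times> real" where
  "beta \<alpha> n k = (- cos (theta \<alpha> n k), sin (theta \<alpha> n k))"

definition bpt :: "real \<Rightarrow> nat \<Rightarrow> (nat \<Rightarrow> nat) \<Rightarrow> nat \<Rightarrow> real \<times> real" where
  "bpt \<alpha> n \<sigma> i = (\<Sum>j = 1..i. beta \<alpha> n (Hilbert_Choice.inv \<sigma> j))"

definition border :: "real \<Rightarrow> nat \<Rightarrow> (nat \<Rightarrow> nat) \<Rightarrow> (real \<times> real) set" where
  "border \<alpha> n \<sigma> = (\<Union>i\<in>{1..n}. closed_segment (bpt \<alpha> n \<sigma> (i - 1)) (bpt \<alpha> n \<sigma> i))"

definition bheight :: "real \<Rightarrow> nat \<Rightarrow> real" where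
  "bheight \<alpha> n = (\<Sum>k = 1..n. sin (theta \<alpha> n k))"

definition Hx :: "(real \<times> real) set \<Rightarrow> real \<Rightarrow> real" where
  "Hx B y = (THE x. (x, y) \<in> B)"

definition border_prec :: "real \<Rightarrow> nat \<Rightarrow> (nat \<Rightarrow> nat) \<Rightarrow> (nat \<Rightarrow> nat) \<Rightarrow> bool" where
  "border_prec \<alpha> n \<sigma> \<tau> \<longleftrightarrow>
     (\<forall>y\<in>{0..bheight \<alpha> n}. Hx (border \<alpha> n \<sigma>) y \<le> Hx (border \<alpha> n \<tau>) y)"

end

theory Submission
  imports Defs
begin

text \<open>For \<pi>/4 \<le> \<alpha> every edge vector \<beta>_k lies in the cone |x| \<le> y, so a border is the graph of a
  1-Lipschitz function of the height and H is well defined. Each step along a reduced word is a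
  cover in the right weak order, which the E-embedding sends to a chain of Bruhat covers
  \<sigma> < (a b) \<circ> \<sigma> in Sym(n). Such a cover raises the number of inversions, which forces
  \<sigma>\<inverse>(a) < \<sigma>\<inverse>(b). The border of (a b) \<circ> \<sigma> is then obtained from that of \<sigma> by translating the
  vertices p_a, ..., p_(b-1) by \<beta>_(\<sigma>\<inverse>(b)) - \<beta>_(\<sigma>\<inverse>(a)), a vector (x, y) with |y| \<le> x, and
  such a translation moves the point of the border at every height to the right.\<close>

section \<open>Cone order and polygonal paths\<close>

definition cone_le :: "real \<times> real \<Rightarrow> real \<times> real \<Rightarrow> bool" where
  "cone_le X Y \<longleftrightarrow> \<bar>fst Y - fst X\<bar> \<le> snd Y - snd X"

definition cone_chain :: "(nat \<Rightarrow> real \<times> real) \<Rightarrow> nat \<Rightarrow> bool" where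
  "cone_chain P m \<longleftrightarrow> (\<forall>i<m. cone_le (P i) (P (Suc i)))"

definition polygonal_path :: "(nat \<Rightarrow> 'a::real_vector) \<Rightarrow> nat \<Rightarrow> 'a set" where
  "polygonal_path P m = (\<Union>i<m. closed_segment (P i) (P (Suc i)))"

lemma cone_le_refl: "cone_le X X"
  by (simp add: cone_le_def)

lemma cone_le_trans: "cone_le X Y \<Longrightarrow> cone_le Y Z \<Longrightarrow> cone_le X Z"
  unfolding cone_le_def by linarith

lemma cone_le_add_iff: "cone_le X (X + V) \<longleftrightarrow> \<bar>fst V\<bar> \<le> snd V"
  by (simp add: cone_le_def)

lemma cone_chain_le:
  assumes "cone_chain P m" "i \<le> j" "j \<le> m"
  shows "cone_le (P i) (P j)"
  using assms(2,3)
proof (induction j rule: dec_induct)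
  case base
  show ?case by (rule cone_le_refl)
next
  case (step k)
  have "cone_le (P k) (P (Suc k))"
    using assms(1) step.prems unfolding cone_chain_def by simp
  then show ?case
    using step cone_le_trans by simp
qed

lemma cone_le_along_segment:
  assumes "cone_le A B" "u \<le> v"
  shows "cone_le ((1 - u) *\<^sub>R A + u *\<^sub>R B) ((1 - v) *\<^sub>R A + v *\<^sub>R B)"
proof -
  have "\<bar>(v - u) * (fst B - fst A)\<bar> \<le> (v - u) * (snd B - snd A)"
    using assms by (simp add: cone_le_def abs_mult mult_left_mono)
  then show ?thesis
    by (simp add: cone_le_def algebra_simps)
qed

lemma closed_segment_cone_le:
  assumes "X \<in> closed_segment A B" "cone_le A B"
  shows "cone_le A X" "cone_le X B"
proof -
  obtain u where u: "0 \<le> u" "u \<le> 1" "X = (1 - u) *\<^sub>R A + u *\<^sub>R B"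
    using assms(1) by (auto simp: in_segment)
  show "cone_le A X"
    using cone_le_along_segment[OF assms(2) u(1)] u(3) by simp
  show "cone_le X B"
    using cone_le_along_segment[OF assms(2) u(2)] u(3) by simp
qed

lemma polygonal_path_cone_comparable:
  assumes P: "cone_chain P m" and "X \<in> polygonal_path P m" "Y \<in> polygonal_path P m"
  shows "cone_le X Y \<or> cone_le Y X"
proof -
  have later_segment: "cone_le X Y"
    if "X \<in> closed_segment (P i) (P (Suc i))" "Y \<in> closed_segment (P j) (P (Suc j))" "i < j" "j < m"
    for X Y i j
  proof -
    have "cone_le X (P (Suc i))"
      using that(1,3,4) P closed_segment_cone_le(2) unfolding cone_chain_def by auto
    moreover have "cone_le (P (Suc i)) (P j)"
      using cone_chain_le[OF P] that(3,4) by simp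
    moreover have "cone_le (P j) Y"
      using that(2,4) P closed_segment_cone_le(1) unfolding cone_chain_def by auto
    ultimately show ?thesis by (meson cone_le_trans)
  qed
  obtain i j where i: "i < m" "X \<in> closed_segment (P i) (P (Suc i))"
    and j: "j < m" "Y \<in> closed_segment (P j) (P (Suc j))"
    using assms(2,3) unfolding polygonal_path_def by blast
  consider "i < j" | "j < i" | "i = j" by linarith
  then show ?thesis
  proof cases
    case 3
    obtain u where u: "X = (1 - u) *\<^sub>R P i + u *\<^sub>R P (Suc i)"
      using i(2) by (auto simp: in_segment)
    obtain v where v: "Y = (1 - v) *\<^sub>R P i + v *\<^sub>R P (Suc i)"
      using j(2) 3 by (auto simp: in_segment)
    have "cone_le (P i) (P (Suc i))"
      using P i(1) unfolding cone_chain_def by blast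
    then show ?thesis
      using cone_le_along_segment u v by (metis linear)
  qed (use later_segment i j in blast)+
qed

lemma Hx_polygonal_path:
  assumes "cone_chain P m" "X \<in> polygonal_path P m"
  shows "Hx (polygonal_path P m) (snd X) = fst X"
  unfolding Hx_def
proof (rule the_equality)
  show "(fst X, snd X) \<in> polygonal_path P m"
    using assms(2) by simp
next
  fix x
  assume "(x, snd X) \<in> polygonal_path P m"
  then show "x = fst X"
    using polygonal_path_cone_comparable[OF assms(1) _ assms(2)] by (fastforce simp: cone_le_def)
qed

lemma polygonal_path_height_exists:
  assumes "cone_chain P m" "0 < m" "snd (P 0) \<le> y" "y \<le> snd (P m)"
  shows "\<exists>X\<in>polygonal_path P m. snd X = y"
  using assms
proof (induction m)
  case 0
  then show ?case by simp
next
  case (Suc m)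
  show ?case
  proof (cases "0 < m \<and> y \<le> snd (P m)")
    case True
    then obtain X where "X \<in> polygonal_path P m" "snd X = y"
      using Suc by (auto simp: cone_chain_def)
    moreover have "polygonal_path P m \<subseteq> polygonal_path P (Suc m)"
      unfolding polygonal_path_def by (rule UN_mono) auto
    ultimately show ?thesis by blast
  next
    case False
    define a b where "a = snd (P m)" and "b = snd (P (Suc m))"
    have ab: "a \<le> y" "y \<le> b"
      using False Suc.prems by (auto simp: a_def b_def)
    define u where "u = (y - a) / (b - a)"
    have u: "0 \<le> u" "u \<le> 1"
      using ab by (auto simp: u_def divide_simps)
    define X where "X = (1 - u) *\<^sub>R P m + u *\<^sub>R P (Suc m)"
    have "X \<in> polygonal_path P (Suc m)"
      unfolding X_def polygonal_path_def using u by (auto simp: in_segment)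
    moreover have "snd X = y"
    proof (cases "a < b")
      case True
      then have "u * (b - a) = y - a"
        by (simp add: u_def)
      then show ?thesis by (simp add: X_def a_def b_def algebra_simps)
    next
      case False
      then have "a = y" "b = y"
        using ab by simp_all
      then show ?thesis by (simp add: X_def u_def a_def b_def)
    qed
    ultimately show ?thesis by blast
  qed
qed

lemma polygonal_path_shift:
  fixes P Q :: "nat \<Rightarrow> 'a::real_vector"
  assumes "\<And>k. k \<le> m \<Longrightarrow> Q k = P k + e k *\<^sub>R d" "\<And>k. k \<le> m \<Longrightarrow> 0 \<le> e k \<and> e k \<le> 1"
    and "X' \<in> polygonal_path Q m"
  obtains X c where "X \<in> polygonal_path P m" "0 \<le> c" "c \<le> 1" "X' = X + c *\<^sub>R d"
proof -
  obtain i u where i: "i < m" and u: "0 \<le> u" "u \<le> 1"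
    and X': "X' = (1 - u) *\<^sub>R Q i + u *\<^sub>R Q (Suc i)"
    using assms(3) unfolding polygonal_path_def by (auto simp: in_segment)
  define X where "X = (1 - u) *\<^sub>R P i + u *\<^sub>R P (Suc i)"
  define c where "c = (1 - u) * e i + u * e (Suc i)"
  have "X \<in> polygonal_path P m"
    unfolding X_def polygonal_path_def using i u by (auto simp: in_segment)
  moreover have "0 \<le> c"
    unfolding c_def using u assms(2) i by simp
  moreover have "c \<le> 1"
    unfolding c_def by (rule convex_bound_le) (use u assms(2) i in auto)
  moreover have "X' = X + c *\<^sub>R d"
    using assms(1)[of i] assms(1)[of "Suc i"] i
    unfolding X' X_def c_def by (simp add: algebra_simps)
  ultimately show ?thesis using that by blast
qed

text \<open>The point of the new path at height y is a point X of the old path moved by c d; the old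
  point at height y lies in the vertical cone of X, hence no further right than X + c d.\<close>
lemma Hx_polygonal_path_shift_le:
  assumes P: "cone_chain P m" and Q: "cone_chain Q m" and m: "0 < m"
    and shift: "\<And>k. k \<le> m \<Longrightarrow> Q k = P k + e k *\<^sub>R d" "\<And>k. k \<le> m \<Longrightarrow> 0 \<le> e k \<and> e k \<le> 1"
    and ends: "e 0 = 0" "e m = 0"
    and d: "\<bar>snd d\<bar> \<le> fst d"
    and y: "snd (P 0) \<le> y" "y \<le> snd (P m)"
  shows "Hx (polygonal_path P m) y \<le> Hx (polygonal_path Q m) y"
proof -
  have "Q 0 = P 0" "Q m = P m"
    using shift(1)[of 0] shift(1)[of m] ends by simp_all
  then have "\<exists>X'\<in>polygonal_path Q m. snd X' = y"
    using polygonal_path_height_exists[OF Q m] y by simp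
  then obtain X' where X': "X' \<in> polygonal_path Q m" "snd X' = y"
    by blast
  obtain Z where Z: "Z \<in> polygonal_path P m" "snd Z = y"
    using polygonal_path_height_exists[OF P m y] by blast
  obtain X c where Xc: "X \<in> polygonal_path P m" "0 \<le> c" "c \<le> 1" "X' = X + c *\<^sub>R d"
    using polygonal_path_shift[OF shift X'(1)] by blast
  have "\<bar>fst Z - fst X\<bar> \<le> \<bar>snd Z - snd X\<bar>"
    using polygonal_path_cone_comparable[OF P Xc(1) Z(1)] unfolding cone_le_def by linarith
  also have "snd Z - snd X = c * snd d"
    using Z(2) X'(2) Xc(4) by simp
  also have "\<bar>c * snd d\<bar> \<le> c * fst d"
    using d Xc(2) by (simp add: abs_mult mult_left_mono)
  finally have "fst Z \<le> fst X'"
    using Xc(4) by simp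
  then show ?thesis
    using Hx_polygonal_path[OF P Z(1)] Hx_polygonal_path[OF Q X'(1)] Z(2) X'(2) by simp
qed

section \<open>Edge vectors and borders\<close>

lemma sin_plus_cos_eq: "sin x + cos x = sqrt 2 * sin (x + pi/4)"
  by (simp add: sin_add sin_45 cos_45 algebra_simps)

lemma sin_minus_cos_eq: "sin x - cos x = sqrt 2 * sin (x - pi/4)"
  by (simp add: sin_diff sin_45 cos_45 algebra_simps)

lemma cos_minus_sin_eq: "cos x - sin x = sqrt 2 * cos (x + pi/4)"
  by (simp add: cos_add sin_45 cos_45 algebra_simps)

lemma sin_plus_cos_eq_cos: "sin x + cos x = sqrt 2 * cos (x - pi/4)"
  by (simp add: cos_diff sin_45 cos_45 algebra_simps)

lemma abs_cos_le_sin: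
  assumes "pi/4 \<le> x" "x \<le> 3*pi/4"
  shows "\<bar>cos x\<bar> \<le> sin x"
proof -
  have "0 \<le> sin (x + pi/4)" "0 \<le> sin (x - pi/4)"
    by (rule sin_ge_zero; use assms in linarith)+
  then have "0 \<le> sin x + cos x" "0 \<le> sin x - cos x"
    unfolding sin_plus_cos_eq sin_minus_cos_eq by simp_all
  then show ?thesis
    by linarith
qed

lemma abs_sin_diff_le_cos_diff:
  assumes "pi/4 \<le> x" "x \<le> y" "y \<le> 3*pi/4"
  shows "\<bar>sin y - sin x\<bar> \<le> cos x - cos y"
proof -
  have "cos (y - pi/4) \<le> cos (x - pi/4)" "cos (y + pi/4) \<le> cos (x + pi/4)"
    by (rule cos_monotone_0_pi_le; use assms in linarith)+
  then have "sin y + cos y \<le> sin x + cos x" "cos y - sin y \<le> cos x - sin x"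
    unfolding sin_plus_cos_eq_cos cos_minus_sin_eq by simp_all
  then show ?thesis
    by linarith
qed

lemma theta_bounds:
  assumes "2 \<le> n" "k \<in> {1..n}" "2 * \<alpha> \<le> pi"
  shows "\<alpha> \<le> theta \<alpha> n k" "theta \<alpha> n k \<le> pi - \<alpha>"
proof -
  define r where "r = (real k - 1) / (real n - 1)"
  have r: "0 \<le> r" "r \<le> 1"
    using assms(1,2) by (auto simp: r_def divide_simps)
  have theta: "theta \<alpha> n k = r * (pi - 2 * \<alpha>) + \<alpha>"
    by (simp add: theta_def r_def)
  have "0 \<le> r * (pi - 2 * \<alpha>)" "r * (pi - 2 * \<alpha>) \<le> pi - 2 * \<alpha>"
    using r assms(3) by (simp_all add: mult_left_le_one_le)
  then show "\<alpha> \<le> theta \<alpha> n k" "theta \<alpha> n k \<le> pi - \<alpha>"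
    unfolding theta by linarith+
qed

lemma theta_mono:
  assumes "2 \<le> n" "k \<le> l" "2 * \<alpha> \<le> pi"
  shows "theta \<alpha> n k \<le> theta \<alpha> n l"
proof -
  have "(real k - 1) * (pi - 2 * \<alpha>) \<le> (real l - 1) * (pi - 2 * \<alpha>)"
    using assms by (intro mult_right_mono) auto
  then show ?thesis
    using assms(1) by (simp add: theta_def divide_right_mono)
qed

lemma beta_in_cone:
  assumes "2 \<le> n" "k \<in> {1..n}" "pi/4 \<le> \<alpha>" "\<alpha> \<le> pi/2"
  shows "\<bar>fst (beta \<alpha> n k)\<bar> \<le> snd (beta \<alpha> n k)"
proof -
  have \<alpha>: "2 * \<alpha> \<le> pi"
    using assms(4) by simp
  have "pi/4 \<le> theta \<alpha> n k" "theta \<alpha> n k \<le> 3*pi/4"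
    using theta_bounds[OF assms(1,2) \<alpha>] assms(3) by linarith+
  then show ?thesis
    by (simp add: beta_def abs_cos_le_sin)
qed

lemma beta_diff_in_horizontal_cone:
  assumes "2 \<le> n" "k \<in> {1..n}" "l \<in> {1..n}" "k \<le> l" "pi/4 \<le> \<alpha>" "\<alpha> \<le> pi/2"
  shows "\<bar>snd (beta \<alpha> n l - beta \<alpha> n k)\<bar> \<le> fst (beta \<alpha> n l - beta \<alpha> n k)"
proof -
  have \<alpha>: "2 * \<alpha> \<le> pi"
    using assms(6) by simp
  have "pi/4 \<le> theta \<alpha> n k" "theta \<alpha> n l \<le> 3*pi/4"
    using theta_bounds[OF assms(1,2) \<alpha>] theta_bounds[OF assms(1,3) \<alpha>] assms(5) by linarith+
  moreover have "theta \<alpha> n k \<le> theta \<alpha> n l"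
    using theta_mono[OF assms(1,4) \<alpha>] .
  ultimately show ?thesis
    using abs_sin_diff_le_cos_diff by (simp add: beta_def)
qed

lemma bpt_0 [simp]: "bpt \<alpha> n \<sigma> 0 = 0"
  by (simp add: bpt_def)

lemma bpt_Suc: "bpt \<alpha> n \<sigma> (Suc k) = bpt \<alpha> n \<sigma> k + beta \<alpha> n (Hilbert_Choice.inv \<sigma> (Suc k))"
  by (simp add: bpt_def)

lemma border_eq_polygonal_path: "border \<alpha> n \<sigma> = polygonal_path (bpt \<alpha> n \<sigma>) n"
  unfolding border_def polygonal_path_def image_Suc_lessThan[symmetric] by simp

lemma snd_bpt_eq_bheight:
  assumes "\<sigma> permutes {1..n}"
  shows "snd (bpt \<alpha> n \<sigma> n) = bheight \<alpha> n"
  using sum.permute[OF permutes_inv[OF assms], of "\<lambda>k. sin (theta \<alpha> n k)"]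
  by (simp add: bpt_def bheight_def snd_sum beta_def)

lemma cone_chain_bpt:
  assumes "2 \<le> n" "pi/4 \<le> \<alpha>" "\<alpha> \<le> pi/2" "\<sigma> permutes {1..n}"
  shows "cone_chain (bpt \<alpha> n \<sigma>) n"
  unfolding cone_chain_def
proof (intro allI impI)
  fix i
  assume "i < n"
  then have "Hilbert_Choice.inv \<sigma> (Suc i) \<in> {1..n}"
    using permutes_in_image[OF permutes_inv[OF assms(4)]] by simp
  then show "cone_le (bpt \<alpha> n \<sigma> i) (bpt \<alpha> n \<sigma> (Suc i))"
    using beta_in_cone assms(1-3) by (simp add: bpt_Suc cone_le_add_iff)
qed

section \<open>Words and length\<close>

lemma wprod_Nil [simp]: "wprod G [] = \<one>\<^bsub>G\<^esub>"
  by (simp add: wprod_def)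

lemma wprod_Cons [simp]: "wprod G (s # ws) = s \<otimes>\<^bsub>G\<^esub> wprod G ws"
  by (simp add: wprod_def)

lemma wprod_closed: "monoid G \<Longrightarrow> set ws \<subseteq> carrier G \<Longrightarrow> wprod G ws \<in> carrier G"
  by (induction ws) (auto simp: monoid.m_closed)

lemma wprod_append:
  assumes "monoid G" "set xs \<subseteq> carrier G" "set ys \<subseteq> carrier G"
  shows "wprod G (xs @ ys) = wprod G xs \<otimes>\<^bsub>G\<^esub> wprod G ys"
  using assms(2) by (induction xs) (auto simp: assms(1,3) monoid.m_assoc monoid.l_one wprod_closed)

lemma cox_len_le: "set ws \<subseteq> S \<Longrightarrow> cox_len G S (wprod G ws) \<le> length ws"
  unfolding cox_len_def by (rule Least_le) blast

lemma cox_len_attained: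
  assumes "set ws \<subseteq> S" "wprod G ws = w"
  obtains vs where "set vs \<subseteq> S" "length vs = cox_len G S w" "wprod G vs = w"
  using LeastI_ex[of "\<lambda>k. \<exists>vs. set vs \<subseteq> S \<and> length vs = k \<and> wprod G vs = w"] assms that
  unfolding cox_len_def by blast

lemma cox_len_take_reduced:
  assumes W: "monoid W" "S \<subseteq> carrier W" and ss: "set ss \<subseteq> S"
    and reduced: "length ss = cox_len W S (wprod W ss)" and k: "k \<le> length ss"
  shows "cox_len W S (wprod W (take k ss)) = k"
proof (rule antisym)
  have take: "set (take k ss) \<subseteq> S" and drop: "set (drop k ss) \<subseteq> S"
    using ss by (meson order_trans set_take_subset set_drop_subset)+
  then show "cox_len W S (wprod W (take k ss)) \<le> k"
    using cox_len_le[OF take] k by simp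
  obtain vs where vs: "set vs \<subseteq> S" "length vs = cox_len W S (wprod W (take k ss))"
    "wprod W vs = wprod W (take k ss)"
    using cox_len_attained[OF take refl] .
  have carrier: "set vs \<subseteq> carrier W" "set (take k ss) \<subseteq> carrier W" "set (drop k ss) \<subseteq> carrier W"
    using vs(1) take drop W(2) by auto
  have "wprod W (vs @ drop k ss) = wprod W vs \<otimes>\<^bsub>W\<^esub> wprod W (drop k ss)"
    using wprod_append[OF W(1) carrier(1,3)] .
  also have "\<dots> = wprod W ss"
    using wprod_append[OF W(1) carrier(2,3)] vs(3) by simp
  finally have "wprod W (vs @ drop k ss) = wprod W ss" .
  then have "length ss \<le> length (vs @ drop k ss)"
    using cox_len_le[of "vs @ drop k ss" S W] vs(1) drop reduced by simp
  then show "k \<le> cox_len W S (wprod W (take k ss))"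
    using vs(2) k by simp
qed

lemma weak_lt_reduced_prefix:
  assumes W: "monoid W" "S \<subseteq> carrier W" and ss: "set ss \<subseteq> S"
    and reduced: "length ss = cox_len W S (wprod W ss)" and k: "k < length ss"
  shows "weak_lt W S (wprod W (take k ss)) (wprod W (take (Suc k) ss))"
proof -
  let ?u = "wprod W (take k ss)" and ?s = "ss ! k"
  have take: "set (take k ss) \<subseteq> carrier W" and s: "?s \<in> S"
    using ss W(2) k by (auto dest: in_set_takeD)
  have "wprod W (take (Suc k) ss) = ?u \<otimes>\<^bsub>W\<^esub> ?s"
    using k take s W by (simp add: take_Suc_conv_app_nth wprod_append monoid.r_one subsetD)
  moreover have "cox_len W S (wprod W (take (Suc k) ss)) = cox_len W S ?u + 1"
    using cox_len_take_reduced[OF W ss reduced] k by simp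
  moreover have "?u \<in> carrier W"
    using W take by (simp add: wprod_closed)
  ultimately show ?thesis
    unfolding weak_lt_def using s by (intro r_into_trancl) auto
qed

section \<open>Length in Sym(n) is the number of inversions\<close>

lemma sym_right_carrier [simp]: "carrier (sym_right n) = {\<sigma>. \<sigma> permutes {1..n}}"
  by (simp add: sym_right_def)

lemma sym_right_mult [simp]: "x \<otimes>\<^bsub>sym_right n\<^esub> y = y \<circ> x"
  by (simp add: sym_right_def)

lemma sym_right_one [simp]: "\<one>\<^bsub>sym_right n\<^esub> = id"
  by (simp add: sym_right_def)

lemma group_sym_right: "group (sym_right n)"
proof (rule groupI)
  fix x
  assume "x \<in> carrier (sym_right n)"
  then have x: "x permutes {1..n}"
    by simp
  show "\<exists>y\<in>carrier (sym_right n). y \<otimes>\<^bsub>sym_right n\<^esub> x = \<one>\<^bsub>sym_right n\<^esub>"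
    using permutes_inv[OF x] permutes_inv_o(1)[OF x] by auto
qed (auto simp: permutes_compose permutes_id comp_assoc)

lemma sym_right_inv: "\<sigma> permutes {1..n} \<Longrightarrow> inv\<^bsub>sym_right n\<^esub> \<sigma> = Hilbert_Choice.inv \<sigma>"
  by (rule group.inv_equality[OF group_sym_right]) (auto simp: permutes_inv permutes_inv_o)

definition inversions :: "nat \<Rightarrow> (nat \<Rightarrow> nat) \<Rightarrow> (nat \<times> nat) set" where
  "inversions n \<sigma> = {(i, j). 1 \<le> i \<and> i < j \<and> j \<le> n \<and> \<sigma> j < \<sigma> i}"

lemma finite_inversions [simp]: "finite (inversions n \<sigma>)"
  by (rule finite_subset[of _ "{1..n} \<times> {1..n}"]) (auto simp: inversions_def)

lemma inversions_id [simp]: "inversions n id = {}"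
  by (auto simp: inversions_def)

lemma card_inversions_comp_adjacent_le:
  assumes "1 \<le> i" "i < n"
  shows "card (inversions n (\<sigma> \<circ> Transposition.transpose i (Suc i))) \<le> Suc (card (inversions n \<sigma>))"
proof -
  let ?s = "Transposition.transpose i (Suc i)"
  let ?f = "\<lambda>(x, y). (?s x, ?s y)"
  have "inversions n (\<sigma> \<circ> ?s) \<subseteq> insert (i, Suc i) (?f ` inversions n \<sigma>)"
  proof
    fix p
    assume p: "p \<in> inversions n (\<sigma> \<circ> ?s)"
    show "p \<in> insert (i, Suc i) (?f ` inversions n \<sigma>)"
    proof (cases "p = (i, Suc i)")
      case False
      then have "?f p \<in> inversions n \<sigma>"
        using p assms by (auto simp: inversions_def Transposition.transpose_def split: if_splits)
      moreover have "p = ?f (?f p)"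
        by (auto split: prod.splits)
      ultimately show ?thesis
        by blast
    qed simp
  qed
  then have "card (inversions n (\<sigma> \<circ> ?s)) \<le> card (insert (i, Suc i) (?f ` inversions n \<sigma>))"
    by (intro card_mono) simp_all
  also have "\<dots> \<le> Suc (card (?f ` inversions n \<sigma>))"
    by (simp add: card_insert_le_m1)
  also have "\<dots> \<le> Suc (card (inversions n \<sigma>))"
    by (simp add: card_image_le)
  finally show ?thesis .
qed

text \<open>Pairs with an entry strictly between a and b are kept, the other pairs are moved by the
  transposition; this injects the inversions of q \<circ> (a b) into those of q other than (a, b).\<close>
lemma card_inversions_comp_transpose_less:
  assumes "1 \<le> a" "a < b" "b \<le> n" "q b < q a"
  shows "card (inversions n (q \<circ> Transposition.transpose a b)) < card (inversions n q)"
proof -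
  define f where "f = (\<lambda>(x::nat, y::nat). if (a < x \<and> x < b) \<or> (a < y \<and> y < b) then (x, y)
    else (Transposition.transpose a b x, Transposition.transpose a b y))"
  have "f (f p) = p" for p
    using assms(2) by (cases p) (auto simp: f_def Transposition.transpose_def)
  then have "inj_on f (inversions n (q \<circ> Transposition.transpose a b))"
    by (metis inj_onI)
  moreover have "f ` inversions n (q \<circ> Transposition.transpose a b) \<subseteq> inversions n q - {(a, b)}"
  proof
    fix p
    assume "p \<in> f ` inversions n (q \<circ> Transposition.transpose a b)"
    then obtain x y where "(x, y) \<in> inversions n (q \<circ> Transposition.transpose a b)" "p = f (x, y)"
      by auto
    then show "p \<in> inversions n q - {(a, b)}"
      using assms
      by (cases "x = a"; cases "x = b"; cases "y = a"; cases "y = b") (auto simp: f_def inversions_def)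
  qed
  ultimately have "card (inversions n (q \<circ> Transposition.transpose a b)) \<le> card (inversions n q - {(a, b)})"
    by (intro card_inj_on_le) simp_all
  also have "\<dots> < card (inversions n q)"
    using assms by (intro card_Diff1_less finite_inversions) (simp add: inversions_def)
  finally show ?thesis .
qed

lemma card_inversions_le_inv:
  assumes "\<sigma> permutes {1..n}"
  shows "card (inversions n \<sigma>) \<le> card (inversions n (Hilbert_Choice.inv \<sigma>))"
proof (rule card_inj_on_le[of "\<lambda>(i, j). (\<sigma> j, \<sigma> i)"])
  show "inj_on (\<lambda>(i, j). (\<sigma> j, \<sigma> i)) (inversions n \<sigma>)"
    using permutes_inj[OF assms] by (auto simp: inj_on_def inj_def)
  show "(\<lambda>(i, j). (\<sigma> j, \<sigma> i)) ` inversions n \<sigma> \<subseteq> inversions n (Hilbert_Choice.inv \<sigma>)"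
    using permutes_in_image[OF assms] permutes_inverses[OF assms] by (fastforce simp: inversions_def)
qed simp

lemma card_inversions_inv:
  assumes "\<sigma> permutes {1..n}"
  shows "card (inversions n (Hilbert_Choice.inv \<sigma>)) = card (inversions n \<sigma>)"
  using card_inversions_le_inv[OF assms] card_inversions_le_inv[OF permutes_inv[OF assms]]
  by (simp add: permutes_inv_inv[OF assms])

text \<open>Without a descent, \<sigma> increases along 1, ..., n, so k \<le> \<sigma> k for all k; since \<sigma> permutes
  {1..n}, both sides have the same sum, forcing equality.\<close>
lemma permutes_descent:
  assumes \<sigma>: "\<sigma> permutes {1..n}" and "\<sigma> \<noteq> id"
  obtains i where "1 \<le> i" "i < n" "\<sigma> (Suc i) < \<sigma> i"
proof (rule ccontr)
  assume "\<not> thesis"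
  with that have increasing: "\<sigma> i < \<sigma> (Suc i)" if "1 \<le> i" "i < n" for i
    using that permutes_inj[OF \<sigma>] by (metis inj_eq linorder_neqE_nat n_not_Suc_n)
  have ge: "k \<le> \<sigma> k" if "k \<in> {1..n}" for k
    using that
  proof (induction k)
    case (Suc k)
    then show ?case
      using permutes_in_image[OF \<sigma>] increasing[of k] by (cases "k = 0") force+
  qed simp
  have "(\<Sum>k\<in>{1..n}. \<sigma> k - k) = (\<Sum>k\<in>{1..n}. \<sigma> k) - (\<Sum>k\<in>{1..n}. k)"
    using ge by (rule sum_subtractf_nat)
  also have "(\<Sum>k\<in>{1..n}. \<sigma> k) = (\<Sum>k\<in>{1..n}. k)"
    using sum.permute[OF \<sigma>, of "\<lambda>k. k"] by simp
  finally have "\<forall>k\<in>{1..n}. \<sigma> k - k = 0"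
    by simp
  then have "\<sigma> k = k" for k
    using ge permutes_not_in[OF \<sigma>] by (cases "k \<in> {1..n}") (auto simp: le_antisym)
  then show False
    using assms(2) by auto
qed

lemma card_inversions_comp_descent:
  assumes "1 \<le> i" "i < n" "\<sigma> (Suc i) < \<sigma> i"
  shows "Suc (card (inversions n (\<sigma> \<circ> Transposition.transpose i (Suc i)))) = card (inversions n \<sigma>)"
proof -
  let ?s = "Transposition.transpose i (Suc i)"
  have "card (inversions n (\<sigma> \<circ> ?s)) < card (inversions n \<sigma>)"
    using card_inversions_comp_transpose_less[of i "Suc i" n \<sigma>] assms by simp
  moreover have "card (inversions n \<sigma>) \<le> Suc (card (inversions n (\<sigma> \<circ> ?s)))"
    using card_inversions_comp_adjacent_le[OF assms(1,2), of "\<sigma> \<circ> ?s"]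
    by (simp only: comp_assoc transpose_comp_involutory comp_id)
  ultimately show ?thesis
    by simp
qed

lemma adjacent_word_of_permutation:
  assumes "\<sigma> permutes {1..n}"
  obtains ws where "set ws \<subseteq> adj_transp n" "length ws = card (inversions n \<sigma>)"
    "wprod (sym_right n) ws = \<sigma>"
proof -
  have "\<exists>ws. set ws \<subseteq> adj_transp n \<and> length ws = N \<and> wprod (sym_right n) ws = \<sigma>"
    if "\<sigma> permutes {1..n}" "card (inversions n \<sigma>) = N" for N \<sigma>
    using that
  proof (induction N arbitrary: \<sigma>)
    case 0
    have "\<sigma> = id"
    proof (rule ccontr)
      assume "\<sigma> \<noteq> id"
      then obtain i where "1 \<le> i" "i < n" "\<sigma> (Suc i) < \<sigma> i"
        using permutes_descent[OF 0(1)] by blast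
      then have "(i, Suc i) \<in> inversions n \<sigma>"
        by (simp add: inversions_def)
      then show False
        using 0 by auto
    qed
    then show ?case
      by (intro exI[of _ "[]"]) simp
  next
    case (Suc N)
    then have "inversions n \<sigma> \<noteq> {}"
      by auto
    then have "\<sigma> \<noteq> id"
      by auto
    then obtain i where i: "1 \<le> i" "i < n" "\<sigma> (Suc i) < \<sigma> i"
      using permutes_descent Suc.prems by blast
    let ?s = "Transposition.transpose i (Suc i)"
    have s: "?s permutes {1..n}" "?s \<in> adj_transp n"
      using i by (auto intro: permutes_swap_id simp: adj_transp_def)
    have "card (inversions n (\<sigma> \<circ> ?s)) = N"
      using card_inversions_comp_descent[OF i] Suc.prems(2) by simp
    then obtain ws where "set ws \<subseteq> adj_transp n" "length ws = N" "wprod (sym_right n) ws = \<sigma> \<circ> ?s"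
      using Suc.IH permutes_compose[OF s(1) Suc.prems(1)] by blast
    then show ?case
      using s(2) by (intro exI[of _ "?s # ws"]) (simp add: o_assoc)
  qed
  then show ?thesis
    using assms that by blast
qed

lemma card_inversions_wprod_le:
  "set ws \<subseteq> adj_transp n \<Longrightarrow> card (inversions n (wprod (sym_right n) ws)) \<le> length ws"
proof (induction ws)
  case (Cons s ws)
  then obtain i where i: "1 \<le> i" "i < n" "s = Transposition.transpose i (Suc i)"
    by (auto simp: adj_transp_def)
  have "card (inversions n (wprod (sym_right n) (s # ws)))
      \<le> Suc (card (inversions n (wprod (sym_right n) ws)))"
    using card_inversions_comp_adjacent_le[OF i(1,2)] i(3) by (simp only: wprod_Cons sym_right_mult)
  moreover have "card (inversions n (wprod (sym_right n) ws)) \<le> length ws"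
    using Cons by simp
  ultimately show ?case
    unfolding length_Cons by linarith
qed simp

lemma cox_len_sym_right:
  assumes "\<sigma> permutes {1..n}"
  shows "cox_len (sym_right n) (adj_transp n) \<sigma> = card (inversions n \<sigma>)"
proof (rule antisym)
  obtain ws where "set ws \<subseteq> adj_transp n" "length ws = card (inversions n \<sigma>)"
    "wprod (sym_right n) ws = \<sigma>"
    using adjacent_word_of_permutation[OF assms] .
  then show "cox_len (sym_right n) (adj_transp n) \<sigma> \<le> card (inversions n \<sigma>)"
    using cox_len_le by metis
  then obtain vs where "set vs \<subseteq> adj_transp n"
    "length vs = cox_len (sym_right n) (adj_transp n) \<sigma>" "wprod (sym_right n) vs = \<sigma>"
    using cox_len_attained \<open>set ws \<subseteq> adj_transp n\<close> \<open>wprod (sym_right n) ws = \<sigma>\<close> by metis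
  then show "card (inversions n \<sigma>) \<le> cox_len (sym_right n) (adj_transp n) \<sigma>"
    using card_inversions_wprod_le by metis
qed

section \<open>Bruhat covers move borders to the right\<close>

lemma reflections_sym_right:
  assumes "t \<in> reflections (sym_right n) (adj_transp n)"
  obtains a b where "1 \<le> a" "a < b" "b \<le> n" "t = Transposition.transpose a b"
proof -
  obtain w s where "w \<in> carrier (sym_right n)" and s: "s \<in> adj_transp n"
    and t: "t = w \<otimes>\<^bsub>sym_right n\<^esub> s \<otimes>\<^bsub>sym_right n\<^esub> inv\<^bsub>sym_right n\<^esub> w"
    using assms unfolding reflections_def by blast
  then have w: "w permutes {1..n}"
    by simp
  obtain i where i: "s = Transposition.transpose i (i + 1)" "1 \<le> i" "i < n"
    using s unfolding adj_transp_def by blast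
  define a b where "a = Hilbert_Choice.inv w i" and "b = Hilbert_Choice.inv w (i + 1)"
  have "t = Hilbert_Choice.inv w \<circ> (Transposition.transpose i (i + 1) \<circ> w)"
    unfolding t i(1) sym_right_inv[OF w] sym_right_mult ..
  also have "\<dots> = Transposition.transpose a b"
    unfolding transpose_comp_eq[OF permutes_bij[OF w]] o_assoc permutes_inv_o(2)[OF w] a_def b_def
    by simp
  finally have ab: "t = Transposition.transpose a b" .
  have "a \<in> {1..n}" "b \<in> {1..n}"
    unfolding a_def b_def using permutes_in_image[OF permutes_inv[OF w]] i(2,3) by simp_all
  moreover have "a \<noteq> b"
    unfolding a_def b_def by (metis permutes_inverses(1)[OF w] n_not_Suc_n Suc_eq_plus1)
  ultimately show ?thesis
  proof (cases "a < b")
    case False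
    then show ?thesis
      using that[of b a] ab \<open>a \<noteq> b\<close> \<open>a \<in> {1..n}\<close> \<open>b \<in> {1..n}\<close>
      by (simp add: transpose_commute)
  qed (use that ab in simp)
qed

lemma inv_less_if_cox_len_comp_transpose_greater:
  assumes x: "x permutes {1..n}" and ab: "1 \<le> a" "a < b" "b \<le> n"
    and len: "cox_len (sym_right n) (adj_transp n) x
      < cox_len (sym_right n) (adj_transp n) (Transposition.transpose a b \<circ> x)"
  shows "Hilbert_Choice.inv x a < Hilbert_Choice.inv x b"
proof (rule ccontr)
  let ?q = "Hilbert_Choice.inv x"
  assume "\<not> ?q a < ?q b"
  moreover have "?q a \<noteq> ?q b"
    using permutes_inj[OF permutes_inv[OF x]] ab(2) by (auto dest: injD)
  ultimately have "card (inversions n (?q \<circ> Transposition.transpose a b)) < card (inversions n ?q)"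
    using card_inversions_comp_transpose_less ab by simp
  moreover have "?q \<circ> Transposition.transpose a b = Hilbert_Choice.inv (Transposition.transpose a b \<circ> x)"
    using o_inv_distrib[OF bij_transpose permutes_bij[OF x]] by simp
  moreover have "Transposition.transpose a b \<circ> x permutes {1..n}"
    using ab by (intro permutes_compose[OF x] permutes_swap_id) auto
  ultimately have "card (inversions n (Transposition.transpose a b \<circ> x)) < card (inversions n x)"
    using card_inversions_inv x by metis
  then show False
    using len cox_len_sym_right x \<open>Transposition.transpose a b \<circ> x permutes {1..n}\<close> by simp
qed

lemma bpt_comp_transpose:
  assumes x: "bij x" and ab: "0 < a" "a < b"
  shows "bpt \<alpha> n (Transposition.transpose a b \<circ> x) k = bpt \<alpha> n x k
    + of_bool (a \<le> k \<and> k < b) *\<^sub>R (beta \<alpha> n (Hilbert_Choice.inv x b) - beta \<alpha> n (Hilbert_Choice.inv x a))"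
proof -
  (* kept abstract: the simplifier would otherwise eta-expand the composition inside bpt *)
  define \<tau> where "\<tau> = Transposition.transpose a b \<circ> x"
  have inv_\<tau>: "Hilbert_Choice.inv \<tau> = Hilbert_Choice.inv x \<circ> Transposition.transpose a b"
    using o_inv_distrib[OF bij_transpose x] by (simp add: \<tau>_def)
  have "bpt \<alpha> n \<tau> k = bpt \<alpha> n x k
    + of_bool (a \<le> k \<and> k < b) *\<^sub>R (beta \<alpha> n (Hilbert_Choice.inv x b) - beta \<alpha> n (Hilbert_Choice.inv x a))"
  proof (induction k)
    case 0
    then show ?case
      using ab by simp
  next
    case (Suc k)
    have "bpt \<alpha> n \<tau> (Suc k)
        = bpt \<alpha> n \<tau> k + beta \<alpha> n (Hilbert_Choice.inv x (Transposition.transpose a b (Suc k)))"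
      by (simp only: bpt_Suc inv_\<tau> comp_apply)
    then show ?case
      using Suc.IH bpt_Suc[of \<alpha> n x k] ab
      by (cases "Suc k = a \<or> Suc k = b") (auto simp: algebra_simps)
  qed
  then show ?thesis
    by (simp only: \<tau>_def)
qed

lemma border_prec_comp_transpose:
  assumes n: "2 \<le> n" and \<alpha>: "pi/4 \<le> \<alpha>" "\<alpha> \<le> pi/2" and x: "x permutes {1..n}"
    and ab: "1 \<le> a" "a < b" "b \<le> n" and less: "Hilbert_Choice.inv x a < Hilbert_Choice.inv x b"
  shows "border_prec \<alpha> n x (Transposition.transpose a b \<circ> x)"
  unfolding border_prec_def border_eq_polygonal_path
proof
  fix y
  assume y: "y \<in> {0..bheight \<alpha> n}"
  let ?d = "beta \<alpha> n (Hilbert_Choice.inv x b) - beta \<alpha> n (Hilbert_Choice.inv x a)"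
  have "Transposition.transpose a b \<circ> x permutes {1..n}"
    using ab by (intro permutes_compose[OF x] permutes_swap_id) auto
  moreover have "Hilbert_Choice.inv x a \<in> {1..n}" "Hilbert_Choice.inv x b \<in> {1..n}"
    using permutes_in_image[OF permutes_inv[OF x]] ab by auto
  ultimately show "Hx (polygonal_path (bpt \<alpha> n x) n) y
      \<le> Hx (polygonal_path (bpt \<alpha> n (Transposition.transpose a b \<circ> x)) n) y"
    using n \<alpha> x ab y less
    by (intro Hx_polygonal_path_shift_le[where e = "\<lambda>k. of_bool (a \<le> k \<and> k < b)" and d = ?d]
        cone_chain_bpt bpt_comp_transpose permutes_bij beta_diff_in_horizontal_cone)
      (auto simp: snd_bpt_eq_bheight)
qed

lemma border_prec_trans:
  "border_prec \<alpha> n \<sigma> \<tau> \<Longrightarrow> border_prec \<alpha> n \<tau> \<rho> \<Longrightarrow> border_prec \<alpha> n \<sigma> \<rho>"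
  unfolding border_prec_def by (meson order_trans)

lemma bruhat_lt_imp_border_prec:
  assumes n: "2 \<le> n" and \<alpha>: "pi/4 \<le> \<alpha>" "\<alpha> \<le> pi/2"
    and "bruhat_lt (sym_right n) (adj_transp n) \<sigma> \<tau>"
  shows "border_prec \<alpha> n \<sigma> \<tau>"
proof -
  have cover: "border_prec \<alpha> n x (x \<otimes>\<^bsub>sym_right n\<^esub> t)"
    if x: "x \<in> carrier (sym_right n)" and t: "t \<in> reflections (sym_right n) (adj_transp n)"
      and len: "cox_len (sym_right n) (adj_transp n) (x \<otimes>\<^bsub>sym_right n\<^esub> t)
        = cox_len (sym_right n) (adj_transp n) x + 1"
    for x t
  proof -
    obtain a b where "1 \<le> a" "a < b" "b \<le> n" "t = Transposition.transpose a b"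
      using reflections_sym_right[OF t] .
    then show ?thesis
      using x len border_prec_comp_transpose[OF n \<alpha>] inv_less_if_cox_len_comp_transpose_greater
      by simp
  qed
  show ?thesis
    using assms(4) unfolding bruhat_lt_def
  proof (induction rule: trancl_induct)
    case (base y)
    then show ?case
      using cover by blast
  next
    case (step y z)
    then show ?case
      using cover border_prec_trans by blast
  qed
qed

theorem theorem1p1:
  fixes W :: "('a, 'b) monoid_scheme" and S :: "'a set"
    and \<phi> :: "'a \<Rightarrow> nat \<Rightarrow> nat" and n :: nat and \<alpha> :: real
  assumes "coxeter_system W S" and "finite (carrier W)"
    and "n \<ge> 2" and "E_embedding W S n \<phi>"
    and "pi / 4 \<le> \<alpha>" and "\<alpha> < pi / 2"
  shows "\<forall>w\<in>carrier W. \<forall>ss. set ss \<subseteq> S \<and> wprod W ss = w \<and> length ss = cox_len W S w \<longrightarrow>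
           (\<forall>k < length ss. border_prec \<alpha> n (\<phi> (wprod W (take k ss)))
                                              (\<phi> (wprod W (take (Suc k) ss))))"
proof (intro ballI allI impI)
  fix w ss k
  assume "set ss \<subseteq> S \<and> wprod W ss = w \<and> length ss = cox_len W S w" and k: "k < length ss"
  then have ss: "set ss \<subseteq> S" and reduced: "length ss = cox_len W S (wprod W ss)"
    by simp_all
  have W: "monoid W" "S \<subseteq> carrier W"
    using assms(1) by (auto simp: coxeter_system_def group.is_monoid)
  let ?u = "wprod W (take k ss)" and ?v = "wprod W (take (Suc k) ss)"
  have "?u \<in> carrier W" "?v \<in> carrier W"
    using W ss by (meson wprod_closed set_take_subset subset_trans)+
  moreover have "weak_lt W S ?u ?v"
    using weak_lt_reduced_prefix[OF W ss reduced k] .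
  ultimately have "bruhat_lt (sym_right n) (adj_transp n) (\<phi> ?u) (\<phi> ?v)"
    using assms(4) unfolding E_embedding_def by blast
  then show "border_prec \<alpha> n (\<phi> ?u) (\<phi> ?v)"
    using bruhat_lt_imp_border_prec assms(3,5,6) by simp
qed

end
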